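(* Assume $D=D_K$ is prime, let $p>2$ be a prime split in $K$ (equivalently $\chi_K(p)=1$), and let $\pi\in\mathcal O$ with $N(\pi)=p$. Then for all $u,v\in\mathcal D^{-1}$ and all $\sigma\in\Gamma_0(p)$, $$M_{\pi u,\pi v}(\sigma)=M_{u,v}\!\left(\begin{pmatrix}p&0\\0&1\end{pmatrix}\sigma\begin{pmatrix}p^{-1}&0\\0&1\end{pmatrix}\right).$$
   Context: $K$ is an imaginary quadratic field of class number one with discriminant $-D$, ring of integers $\mathcal O$, quadratic character $\chi_K$, $N(a)=a\bar a=|a|^2$, $\mathcal D^{-1}=\mathcal O/\sqrt{-D}$, $e[z]=e^{2\pi iz}$. For $\sigma=\begin{pmatrix}a&b\\ c&d\end{pmatrix}\in\mathrm{SL}_2(\mathbf Z)$ and $u,v\in\mathcal D^{-1}$ define $M_{u,v}(\sigma)=\frac{-i}{c\sqrt D}\sum_{\gamma\in(u+\mathcal O)/c\mathcal O}e\big[\frac{a|\gamma|^2-\gamma\bar v-\bar\gamma v+d|v|^2}{c}\big]$ if $c\ne0$, and $M_{u,v}(\sigma)=\mathrm{sign}(a)\,\delta_{u,av}\,e[ab|u|^2]$ if $c=0$, where $\delta_{u,av}=1$ if $u\equiv av\pmod{\mathcal O}$ and $0$ otherwise. (These are the coefficients in the transformation law $\vartheta_u|[\sigma]_1=\sum_{v\in\mathcal D^{-1}/\mathcal O}M_{u,v}(\sigma)\vartheta_v$ of the theta functions $\vartheta_u(\tau,z,w)=\sum_{a\in u+\mathcal O}e[N(a)\tau+\bar az+aw]$.)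 *)

theory Defs
  imports Complex_Main "HOL-Number_Theory.Number_Theory"
begin

text \<open>Setting: K = Q(sqrt(-D)) with D a prime, D = 3 mod 4, so the discriminant of K is -D,
  embedded in the complex numbers. The ring of integers is O = Z[omega], omega = (1 + i sqrt D)/2.\<close>

definition omegaK :: "nat \<Rightarrow> complex" where
  "omegaK D = (1 + \<i> * complex_of_real (sqrt (real D))) / 2"

definition OK :: "nat \<Rightarrow> complex set" where
  "OK D = {of_int x + of_int y * omegaK D | x y. True}"

text \<open>sqrt(-D) = i sqrt D; inverse different D^{-1} = O / sqrt(-D).\<close>
definition sqrtmD :: "nat \<Rightarrow> complex" where
  "sqrtmD D = \<i> * complex_of_real (sqrt (real D))"

definition Dinv :: "nat \<Rightarrow> complex set" where
  "Dinv D = (\<lambda>z. z / sqrtmD D) ` OK D"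

definition is_OK_ideal :: "nat \<Rightarrow> complex set \<Rightarrow> bool" where
  "is_OK_ideal D I \<longleftrightarrow> I \<subseteq> OK D \<and> 0 \<in> I \<and> (\<forall>x\<in>I. \<forall>y\<in>I. x + y \<in> I)
     \<and> (\<forall>r\<in>OK D. \<forall>x\<in>I. r * x \<in> I)"

definition class_number_one :: "nat \<Rightarrow> bool" where
  "class_number_one D \<longleftrightarrow> (\<forall>I. is_OK_ideal D I \<longrightarrow> (\<exists>a\<in>OK D. I = (\<lambda>x. a * x) ` OK D))"

definition NK :: "complex \<Rightarrow> complex" where
  "NK a = a * cnj a"

definition ee :: "complex \<Rightarrow> complex" where
  "ee z = exp (2 * of_real pi * \<i> * z)"

definition chiK :: "nat \<Rightarrow> nat \<Rightarrow> int" where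
  "chiK D p = Legendre (- int D) (int p)"

text \<open>Matrices sigma = (a b; c d) in SL2(Z) are represented as quadruples (a,b,c,d).\<close>
definition SL2Z :: "(int \<times> int \<times> int \<times> int) set" where
  "SL2Z = {(a,b,c,d). a * d - b * c = 1}"

definition Gamma0 :: "nat \<Rightarrow> (int \<times> int \<times> int \<times> int) set" where
  "Gamma0 N = {(a,b,c,d). (a,b,c,d) \<in> SL2Z \<and> int N dvd c}"

text \<open>(p 0; 0 1) (a b; c d) (p^{-1} 0; 0 1) = (a, p b; c/p, d)  (integral when p divides c).\<close>
definition conj_p :: "nat \<Rightarrow> int \<times> int \<times> int \<times> int \<Rightarrow> int \<times> int \<times> int \<times> int" where
  "conj_p p \<sigma> = (case \<sigma> of (a,b,c,d) \<Rightarrow> (a, int p * b, c div int p, d))"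

text \<open>The coefficients M_{u,v}(sigma). For c nonzero, the sum over (u+O)/cO is taken over the
  representatives u + x + y omega, 0 <= x,y < |c| (the summand is independent of the choice).\<close>
definition Mcoef :: "nat \<Rightarrow> complex \<Rightarrow> complex \<Rightarrow> int \<times> int \<times> int \<times> int \<Rightarrow> complex" where
  "Mcoef D u v \<sigma> = (case \<sigma> of (a,b,c,d) \<Rightarrow>
     if c \<noteq> 0 then
       (- \<i> / (of_int c * complex_of_real (sqrt (real D)))) *
       (\<Sum>(x,y)\<in>{0..<\<bar>c\<bar>} \<times> {0..<\<bar>c\<bar>}.
          (let \<gamma> = u + of_int x + of_int y * omegaK D in
            ee ((of_int a * NK \<gamma> - \<gamma> * cnj v - cnj \<gamma> * v + of_int d * NK v) / of_int c)))
     else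
       of_int (sgn a) * (if u - of_int a * v \<in> OK D then 1 else 0) * ee (of_int (a * b) * NK u))"

end

theory Submission
  imports Defs "HOL-Analysis.Complex_Transcendental"
begin

text \<open>
  For \<open>c = p c' \<noteq> 0\<close> the phase of \<open>(\<pi> u, \<pi> v)\<close> modulo \<open>c\<close> at \<open>\<pi> \<gamma>\<close> equals the phase of
  \<open>(u, v)\<close> modulo \<open>c'\<close> at \<open>\<gamma>\<close>, because \<open>\<pi> * cnj \<pi> = p\<close>. The left-hand sum runs over
  \<open>O/cO\<close> and the right-hand one over \<open>O/c'O\<close>. Since \<open>p\<close> splits, the elements
  \<open>\<pi> \<gamma> + r + c' \<pi> s\<close>, with \<open>\<gamma>\<close> running over \<open>O/c'O\<close> and \<open>0 \<le> r, s < p\<close>, represent \<open>O/cO\<close>.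
  Shifting by \<open>c' \<pi> s\<close> multiplies the summand by \<open>e[a r t s / p]\<close>, where \<open>t = \<pi> + cnj \<pi>\<close> is
  prime to \<open>p\<close>, and \<open>p\<close> does not divide \<open>a\<close> since \<open>\<sigma> \<in> \<Gamma>\<^sub>0(p)\<close>; hence the sum over \<open>s\<close> kills
  every \<open>r \<noteq> 0\<close> and leaves the factor \<open>p\<close> that turns \<open>1/c\<close> into \<open>1/c'\<close>. For \<open>c = 0\<close> it
  suffices that \<open>\<pi> w \<in> O \<longleftrightarrow> w \<in> O\<close> for \<open>w \<in> D\<^sup>-\<^sup>1\<close>, which holds because \<open>p\<close> is prime to \<open>D\<close>.
\<close>

lemma of_real_sqrt_nat_squared: "complex_of_real (sqrt (real D)) ^ 2 = of_nat D"
  by (metis of_real_of_nat_eq of_real_power real_sqrt_pow2 of_nat_0_le_iff)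

lemma omegaK_squared:
  assumes "D mod 4 = 3"
  shows "omegaK D * omegaK D = omegaK D - of_int ((int D + 1) div 4)"
proof -
  have k: "of_int ((int D + 1) div 4) * 4 = (of_nat D + 1 :: complex)"
  proof -
    have "(int D + 1) div 4 * 4 = int D + 1" using assms by presburger
    then have "of_int ((int D + 1) div 4 * 4) = (of_int (int D + 1) :: complex)" by simp
    then show ?thesis by simp
  qed
  have "omegaK D * omegaK D = (1 + 2*\<i>*complex_of_real (sqrt (real D)) - of_nat D)/4"
    unfolding omegaK_def using of_real_sqrt_nat_squared[of D]
    by (simp add: field_simps power2_eq_square)
  also have "\<dots> = omegaK D - of_int ((int D + 1) div 4)"
    unfolding omegaK_def using k by (simp add: field_simps)
  finally show ?thesis .
qed

lemma cnj_omegaK: "cnj (omegaK D) = 1 - omegaK D"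
  unfolding omegaK_def by (simp add: complex_eq_iff)

lemma OK_iff: "z \<in> OK D \<longleftrightarrow> (\<exists>x y. z = of_int x + of_int y * omegaK D)"
  unfolding OK_def by auto

lemma OK_coords [simp]: "of_int x + of_int y * omegaK D \<in> OK D"
  unfolding OK_iff by blast

lemma OK_coords_unique:
  assumes "D > 0" and "of_int x + of_int y * omegaK D = (of_int x' + of_int y' * omegaK D :: complex)"
  shows "x = x' \<and> y = y'"
proof -
  have "Im (of_int x + of_int y * omegaK D) = Im (of_int x' + of_int y' * omegaK D)"
    and "Re (of_int x + of_int y * omegaK D) = Re (of_int x' + of_int y' * omegaK D)"
    using assms(2) by simp_all
  then show ?thesis using assms(1) unfolding omegaK_def by simp
qed

lemma OK_of_int [simp]: "of_int n \<in> OK D"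
  unfolding OK_iff by (rule exI[of _ n], rule exI[of _ 0]) simp

lemma OK_of_nat [simp]: "of_nat n \<in> OK D"
  using OK_of_int[of "int n" D] by simp

lemma OK_1 [simp]: "1 \<in> OK D"
  using OK_of_int[of 1 D] by simp

lemma OK_omegaK [simp]: "omegaK D \<in> OK D"
  unfolding OK_iff by (rule exI[of _ 0], rule exI[of _ 1]) simp

lemma OK_add [intro]:
  assumes "a \<in> OK D" "b \<in> OK D"
  shows "a + b \<in> OK D"
proof -
  obtain x y x' y' where "a = of_int x + of_int y * omegaK D" "b = of_int x' + of_int y' * omegaK D"
    using assms unfolding OK_iff by blast
  then have "a + b = of_int (x + x') + of_int (y + y') * omegaK D" by (simp add: algebra_simps)
  then show ?thesis unfolding OK_iff by blast
qed

lemma OK_uminus [intro]: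
  assumes "a \<in> OK D"
  shows "- a \<in> OK D"
proof -
  obtain x y where "a = of_int x + of_int y * omegaK D" using assms unfolding OK_iff by blast
  then have "- a = of_int (- x) + of_int (- y) * omegaK D" by (simp add: algebra_simps)
  then show ?thesis unfolding OK_iff by blast
qed

lemma OK_diff [intro]: "a \<in> OK D \<Longrightarrow> b \<in> OK D \<Longrightarrow> a - b \<in> OK D"
  using OK_add[of a D "- b"] OK_uminus by (simp add: algebra_simps)

lemma OK_mult [intro]:
  assumes "D mod 4 = 3" "a \<in> OK D" "b \<in> OK D"
  shows "a * b \<in> OK D"
proof -
  obtain x y x' y' where a: "a = of_int x + of_int y * omegaK D" and b: "b = of_int x' + of_int y' * omegaK D"
    using assms unfolding OK_iff by blast
  define k where "k = (int D + 1) div 4"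
  have "a * b = of_int (x*x') + of_int (x*y' + y*x') * omegaK D + of_int (y*y') * (omegaK D * omegaK D)"
    unfolding a b by (simp add: algebra_simps)
  also have "\<dots> = of_int (x*x' - y*y'*k) + of_int (x*y' + y*x' + y*y') * omegaK D"
    unfolding omegaK_squared[OF assms(1)] k_def by (simp add: algebra_simps)
  finally show ?thesis unfolding OK_iff by blast
qed

lemma OK_cnj [intro]:
  assumes "a \<in> OK D"
  shows "cnj a \<in> OK D"
proof -
  obtain x y where "a = of_int x + of_int y * omegaK D" using assms unfolding OK_iff by blast
  then have "cnj a = of_int (x + y) + of_int (- y) * omegaK D" by (simp add: cnj_omegaK algebra_simps)
  then show ?thesis unfolding OK_iff by blast
qed

lemma NK_mult: "NK (a * b) = NK a * NK b"
  unfolding NK_def by simp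

lemma NK_coords:
  assumes "D mod 4 = 3"
  shows "NK (of_int x + of_int y * omegaK D) = of_int (x*x + x*y + (int D + 1) div 4 * y*y)"
proof -
  have "NK (of_int x + of_int y * omegaK D)
      = of_int (x*x + x*y) + of_int (y*y) * (omegaK D - omegaK D * omegaK D)"
    unfolding NK_def by (simp add: cnj_omegaK algebra_simps)
  then show ?thesis unfolding omegaK_squared[OF assms] by (simp add: algebra_simps)
qed

lemma NK_OK_Ints: "D mod 4 = 3 \<Longrightarrow> a \<in> OK D \<Longrightarrow> NK a \<in> \<int>"
  unfolding OK_iff by (auto simp: NK_coords)

lemma sqrtmD_eq: "sqrtmD D = 2 * omegaK D - 1"
  unfolding sqrtmD_def omegaK_def by (simp add: field_simps)

lemma OK_sqrtmD [simp]: "sqrtmD D \<in> OK D"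
  unfolding sqrtmD_eq mult_2 by (rule OK_diff[OF OK_add[OF OK_omegaK OK_omegaK] OK_1])

lemma sqrtmD_nonzero: "D > 0 \<Longrightarrow> sqrtmD D \<noteq> 0"
  unfolding sqrtmD_def by simp

lemma cnj_sqrtmD: "cnj (sqrtmD D) = - sqrtmD D"
  unfolding sqrtmD_def by simp

lemma sqrtmD_squared: "sqrtmD D * sqrtmD D = - of_nat D"
proof -
  have "sqrtmD D * sqrtmD D = (\<i> * \<i>) * (complex_of_real (sqrt (real D)))^2"
    unfolding sqrtmD_def power2_eq_square by (simp only: mult_ac)
  then show ?thesis using of_real_sqrt_nat_squared[of D] by simp
qed

lemma Dinv_iff: "w \<in> Dinv D \<longleftrightarrow> (\<exists>z\<in>OK D. w = z / sqrtmD D)"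
  unfolding Dinv_def by auto

lemma Dinv_mult:
  assumes "D mod 4 = 3" "m \<in> OK D" "w \<in> Dinv D"
  shows "m * w \<in> Dinv D"
proof -
  obtain z where "z \<in> OK D" "w = z / sqrtmD D" using assms(3) unfolding Dinv_iff by blast
  then show ?thesis unfolding Dinv_iff using OK_mult[OF assms(1,2)] by (intro bexI[of _ "m * z"]) auto
qed

lemma Dinv_add:
  assumes "v \<in> Dinv D" "w \<in> Dinv D"
  shows "v + w \<in> Dinv D"
proof -
  obtain y z where "y \<in> OK D" "v = y / sqrtmD D" "z \<in> OK D" "w = z / sqrtmD D"
    using assms unfolding Dinv_iff by blast
  then show ?thesis unfolding Dinv_iff by (intro bexI[of _ "y + z"]) (auto simp: add_divide_distrib)
qed

lemma Dinv_diff: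
  assumes "v \<in> Dinv D" "w \<in> Dinv D"
  shows "v - w \<in> Dinv D"
proof -
  obtain y z where "y \<in> OK D" "v = y / sqrtmD D" "z \<in> OK D" "w = z / sqrtmD D"
    using assms unfolding Dinv_iff by blast
  then show ?thesis unfolding Dinv_iff by (intro bexI[of _ "y - z"]) (auto simp: diff_divide_distrib)
qed

lemma OK_subset_Dinv:
  assumes "D mod 4 = 3" "D > 0" "z \<in> OK D"
  shows "z \<in> Dinv D"
proof -
  have "z = (z * sqrtmD D) / sqrtmD D" using sqrtmD_nonzero[OF assms(2)] by simp
  then show ?thesis unfolding Dinv_iff using OK_mult[OF assms(1,3) OK_sqrtmD] by blast
qed

lemma Dinv_trace_Ints:
  assumes "D mod 4 = 3" "D > 0" "w \<in> Dinv D" "l \<in> OK D"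
  shows "w * cnj l + cnj w * l \<in> \<int>"
proof -
  obtain z where z: "z \<in> OK D" "w = z / sqrtmD D" using assms unfolding Dinv_iff by blast
  obtain m n where mn: "z * cnj l = of_int m + of_int n * omegaK D"
    using OK_mult[OF assms(1) z(1) OK_cnj[OF assms(4)]] unfolding OK_iff by blast
  have "w * cnj l + cnj w * l = (z * cnj l - cnj (z * cnj l)) / sqrtmD D"
    by (simp add: z(2) cnj_sqrtmD diff_divide_distrib)
  also have "z * cnj l - cnj (z * cnj l) = of_int n * sqrtmD D"
    unfolding mn sqrtmD_eq by (simp add: cnj_omegaK algebra_simps)
  finally show ?thesis using sqrtmD_nonzero[OF assms(2)] by simp
qed

lemma Dinv_add_cnj_Ints: "D mod 4 = 3 \<Longrightarrow> D > 0 \<Longrightarrow> w \<in> Dinv D \<Longrightarrow> w + cnj w \<in> \<int>"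
  using Dinv_trace_Ints[of D w 1] by simp

lemma of_nat_D_mult_Dinv:
  assumes "D mod 4 = 3" "D > 0" "w \<in> Dinv D"
  shows "of_nat D * w \<in> OK D"
proof -
  obtain z where z: "z \<in> OK D" "w = z / sqrtmD D" using assms unfolding Dinv_iff by blast
  have "of_nat D * w = - (sqrtmD D * sqrtmD D) * (z / sqrtmD D)"
    using sqrtmD_squared[of D] z(2) by simp
  also have "\<dots> = - (sqrtmD D * z)" using sqrtmD_nonzero[OF assms(2)] by (simp add: divide_simps)
  finally show ?thesis using OK_uminus[OF OK_mult[OF assms(1) OK_sqrtmD z(1)]] by simp
qed

lemma ee_add: "ee (a + b) = ee a * ee b"
  unfolding ee_def by (simp add: distrib_left exp_add)

lemma ee_eq_1_iff: "ee z = 1 \<longleftrightarrow> z \<in> \<int>"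
proof -
  have "ee z = 1 \<longleftrightarrow> (\<exists>n::int. 2 * of_real pi * \<i> * z = of_int (2 * n) * pi * \<i>)"
    unfolding ee_def using exp_eq[of _ 0] by simp
  also have "\<dots> \<longleftrightarrow> (\<exists>n::int. z = of_int n)"
    by (auto simp: algebra_simps)
  finally show ?thesis by (auto elim: Ints_cases)
qed

lemma ee_Ints: "n \<in> \<int> \<Longrightarrow> ee n = 1"
  by (simp add: ee_eq_1_iff)

lemma ee_add_Ints: "n \<in> \<int> \<Longrightarrow> ee (z + n) = ee z"
  by (simp add: ee_add ee_Ints)

lemma ee_geometric_sum:
  fixes k :: int and p :: nat
  assumes "p > 0"
  shows "(\<Sum>s<p. ee (of_int k * of_nat s / of_nat p)) = (if int p dvd k then of_nat p else 0)"
proof -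
  define x where "x = ee (of_int k / of_nat p)"
  have pow: "ee (of_int k * of_nat s / of_nat p) = x ^ s" for s
  proof -
    have "ee (of_int k * of_nat s / of_nat p) = exp (of_nat s * (2 * of_real pi * \<i> * (of_int k / of_nat p)))"
      unfolding ee_def by (simp add: algebra_simps)
    also have "\<dots> = x ^ s" unfolding x_def ee_def by (rule exp_of_nat_mult)
    finally show ?thesis .
  qed
  have x_eq_1: "x = 1 \<longleftrightarrow> int p dvd k"
  proof -
    have "x = 1 \<longleftrightarrow> (\<exists>n. of_int k / of_nat p = (of_int n :: complex))"
      unfolding x_def ee_eq_1_iff by (auto elim: Ints_cases)
    also have "\<dots> \<longleftrightarrow> int p dvd k"
      using assms by (auto simp: field_simps dvd_def) (metis of_int_eq_iff of_int_mult of_int_of_nat_eq)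
    finally show ?thesis .
  qed
  show ?thesis
  proof (cases "int p dvd k")
    case True
    then show ?thesis using x_eq_1 by (simp add: pow)
  next
    case False
    have "x ^ p = 1" using pow[of p] assms by (simp add: ee_Ints)
    then show ?thesis using False x_eq_1 by (simp add: pow geometric_sum)
  qed
qed

lemma not_dvd_if_chiK_eq_1: "chiK D p = 1 \<Longrightarrow> \<not> int p dvd int D"
  unfolding chiK_def Legendre_def by (auto simp: cong_0_iff)

lemma prime_norm_form_not_dvd_trace:
  fixes p D :: nat and a b k :: int
  assumes "prime p" "p > 2" "\<not> int p dvd int D"
    and norm: "a*a + a*b + k*b*b = int p" and k: "4 * k = int D + 1"
  shows "\<not> int p dvd 2*a + b"
proof
  assume "int p dvd 2*a + b"
  then obtain t where t: "2*a + b = int p * t" by blast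
  have "4 * int p = 4*(a*a + a*b) + (4*k)*(b*b)" using norm by (simp add: algebra_simps)
  also have "\<dots> = (2*a + b) * (2*a + b) + int D * (b*b)" unfolding k by (simp add: algebra_simps)
  finally have sq: "4 * int p = (2*a + b) * (2*a + b) + int D * (b*b)" .
  then have "int D * (b*b) = int p * (4 - int p * t * t)"
    unfolding t by (simp add: algebra_simps)
  then have "int p dvd int D * (b*b)" by (rule dvdI)
  then have "int p dvd b" using assms(1,3) by (simp add: prime_dvd_mult_iff)
  then obtain b' where b': "b = int p * b'" by blast
  have "int p * 4 = int p * (int p * (t*t + int D * (b'*b')))"
    using sq[unfolded t] unfolding b' by (simp add: algebra_simps)
  then have "int p dvd 4" using assms(1) by (metis dvd_triv_left mult_cancel_left of_nat_eq_0_iff prime_gt_0_nat less_irrefl)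
  then have "p dvd 2 * 2" by (metis int_dvd_int_iff of_nat_numeral mult_2 numeral_Bit0)
  then have "p dvd 2" using assms(1) prime_dvd_mult_iff[of p 2 2] by blast
  then show False using assms(2) by (simp add: dvd_imp_le leD)
qed

lemma trace_prime_norm_not_dvd:
  fixes p :: nat
  assumes "D mod 4 = 3" "prime p" "p > 2" "\<not> int p dvd int D" "\<pi> \<in> OK D" "NK \<pi> = of_nat p"
  obtains t where "\<pi> + cnj \<pi> = of_int t" "\<not> int p dvd t"
proof -
  obtain a b where ab: "\<pi> = of_int a + of_int b * omegaK D" using assms(5) unfolding OK_iff by blast
  define k where "k = (int D + 1) div 4"
  have k4: "4 * k = int D + 1" unfolding k_def using assms(1) by presburger
  have "\<pi> + cnj \<pi> = of_int (2*a + b)" unfolding ab by (simp add: cnj_omegaK algebra_simps)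
  moreover have "a*a + a*b + k*b*b = int p"
    using assms(6) unfolding ab NK_coords[OF assms(1)] k_def by (metis of_int_eq_iff of_int_of_nat_eq)
  ultimately show ?thesis using that prime_norm_form_not_dvd_trace[OF assms(2-4) _ k4] by blast
qed

lemma int_in_pi_OK_small_eq_0:
  fixes p :: nat and r :: int
  assumes "D mod 4 = 3" "prime p" "NK \<pi> = of_nat p" "\<nu> \<in> OK D" "of_int r = \<pi> * \<nu>" "\<bar>r\<bar> < int p"
  shows "r = 0"
proof -
  obtain m where m: "NK \<nu> = of_int m" using NK_OK_Ints[OF assms(1,4)] by (auto elim: Ints_cases)
  have "of_int (r * r) = NK (of_int r :: complex)" by (simp add: NK_def)
  also have "\<dots> = NK \<pi> * NK \<nu>" unfolding assms(5) NK_mult ..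
  also have "\<dots> = of_int (int p * m)" using assms(3) m by simp
  finally have "of_int (r * r) = (of_int (int p * m) :: complex)" .
  then have "int p dvd r * r" by (simp only: of_int_eq_iff) simp
  then have "int p dvd r" using assms(2) by (metis prime_dvd_mult_iff prime_nat_int_transfer)
  then show ?thesis using assms(6) by (cases "r = 0") (auto dest: dvd_imp_le_int)
qed

lemma Dinv_OK_if_pi_mult_OK:
  fixes p :: nat
  assumes "D mod 4 = 3" "D > 0" "prime p" "\<not> int p dvd int D" "\<pi> \<in> OK D" "NK \<pi> = of_nat p"
    and "w \<in> Dinv D" "\<pi> * w \<in> OK D"
  shows "w \<in> OK D"
proof -
  have pw: "of_nat p * w \<in> OK D"
  proof -
    have "of_nat p * w = (\<pi> * cnj \<pi>) * w" using assms(6) by (simp add: NK_def)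
    also have "\<dots> = cnj \<pi> * (\<pi> * w)" by (simp add: ac_simps)
    finally show ?thesis using OK_mult[OF assms(1) OK_cnj[OF assms(5)] assms(8)] by (simp only:)
  qed
  have "coprime (int p) (int D)" using prime_imp_coprime[of "int p" "int D"] assms(3,4) by simp
  then obtain x y where "x * int p + y * int D = 1" using bezout_int[of "int p" "int D"] by auto
  then have "of_int x * of_nat p + of_int y * of_nat D = (1::complex)"
    by (metis of_int_1 of_int_add of_int_mult of_int_of_nat_eq)
  then have "w = of_int x * (of_nat p * w) + of_int y * (of_nat D * w)"
    by (metis distrib_right mult.assoc mult_1)
  also have "\<dots> \<in> OK D"
    using OK_mult[OF assms(1) OK_of_int pw] OK_mult[OF assms(1) OK_of_int of_nat_D_mult_Dinv[OF assms(1,2,7)]] by blast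
  finally show ?thesis .
qed

definition Mphase :: "int \<Rightarrow> int \<Rightarrow> int \<Rightarrow> complex \<Rightarrow> complex \<Rightarrow> complex" where
  "Mphase a d c v \<gamma> = (of_int a * NK \<gamma> - \<gamma> * cnj v - cnj \<gamma> * v + of_int d * NK v) / of_int c"

lemma Mcoef_lower_nonzero:
  "c \<noteq> 0 \<Longrightarrow> Mcoef D u v (a, b, c, d) = - \<i> / (of_int c * complex_of_real (sqrt (real D))) *
     (\<Sum>(x,y)\<in>{0..<\<bar>c\<bar>} \<times> {0..<\<bar>c\<bar>}. ee (Mphase a d c v (u + of_int x + of_int y * omegaK D)))"
  by (simp add: Mcoef_def Mphase_def Let_def)

lemma Mphase_translate:
  "c \<noteq> 0 \<Longrightarrow> Mphase a d c v (w + of_int c * l) = Mphase a d c v w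
     + (of_int a * (w * cnj l + cnj w * l) + of_int a * of_int c * NK l - (v * cnj l + cnj v * l))"
  unfolding Mphase_def NK_def by (simp add: field_simps)

lemma ee_Mphase_periodic:
  assumes "D mod 4 = 3" "D > 0" "c \<noteq> 0" "w \<in> Dinv D" "v \<in> Dinv D" "l \<in> OK D"
  shows "ee (Mphase a d c v (w + of_int c * l)) = ee (Mphase a d c v w)"
  unfolding Mphase_translate[OF assms(3)]
  by (rule ee_add_Ints, rule Ints_diff[OF Ints_add[OF Ints_mult[OF Ints_of_int Dinv_trace_Ints[OF assms(1,2,4,6)]]
      Ints_mult[OF Ints_mult[OF Ints_of_int Ints_of_int] NK_OK_Ints[OF assms(1,6)]]] Dinv_trace_Ints[OF assms(1,2,5,6)]])

lemma Mphase_mult_prime_norm: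
  assumes "\<pi> * cnj \<pi> = of_nat p" "p \<noteq> 0"
  shows "Mphase a d (int p * c') (\<pi> * v) (\<pi> * g) = Mphase a d c' v g"
proof -
  have "of_int a * NK (\<pi> * g) - (\<pi> * g) * cnj (\<pi> * v) - cnj (\<pi> * g) * (\<pi> * v) + of_int d * NK (\<pi> * v)
     = (\<pi> * cnj \<pi>) * (of_int a * NK g - g * cnj v - cnj g * v + of_int d * NK v)"
    unfolding NK_def by (simp add: algebra_simps)
  then show ?thesis unfolding Mphase_def assms(1) using assms(2) by simp
qed

lemma Mphase_shift:
  fixes p r s :: nat
  assumes "\<pi> * cnj \<pi> = of_nat p" "p \<noteq> 0" "c' \<noteq> 0"
  shows "Mphase a d (int p * c') (\<pi> * v) (\<pi> * g + of_nat r + of_int c' * \<pi> * of_nat s)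
     = Mphase a d (int p * c') (\<pi> * v) (\<pi> * g + of_nat r) + of_int a * of_nat r * (\<pi> + cnj \<pi>) * of_nat s / of_nat p
       + (of_int a * of_nat s * (g + cnj g) + of_int a * of_int c' * of_nat s * of_nat s - of_nat s * (v + cnj v))"
proof -
  define W where "W = \<pi> * g + of_nat r"
  define X where "X = of_int c' * \<pi> * of_nat s"
  have NK_W_X: "NK (W + X) = NK W
     + of_int c' * of_nat s * (of_nat p * (g + cnj g) + of_nat r * (\<pi> + cnj \<pi>)) + of_int c' * of_int c' * of_nat s * of_nat s * of_nat p"
    unfolding NK_def W_def X_def assms(1)[symmetric] by (simp add: algebra_simps)
  have trace_W_X: "(W + X) * cnj (\<pi> * v) + cnj (W + X) * (\<pi> * v)
      = (W * cnj (\<pi> * v) + cnj W * (\<pi> * v)) + of_int c' * of_nat s * of_nat p * (v + cnj v)"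
    unfolding X_def assms(1)[symmetric] by (simp add: algebra_simps)
  have Mphase_eq: "Mphase a d (int p * c') (\<pi> * v) z
      = (of_int a * NK z - (z * cnj (\<pi> * v) + cnj z * (\<pi> * v)) + of_int d * NK (\<pi> * v)) / (of_nat p * of_int c')" for z
    unfolding Mphase_def by (simp add: algebra_simps)
  have "Mphase a d (int p * c') (\<pi> * v) (W + X) = Mphase a d (int p * c') (\<pi> * v) W
      + of_int a * of_nat r * (\<pi> + cnj \<pi>) * of_nat s / of_nat p
      + (of_int a * of_nat s * (g + cnj g) + of_int a * of_int c' * of_nat s * of_nat s - of_nat s * (v + cnj v))"
    unfolding Mphase_eq NK_W_X trace_W_X using assms(2,3) by (simp add: field_simps)
  then show ?thesis unfolding W_def X_def by (simp add: add.assoc)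
qed

text \<open>The sum over \<open>s\<close> is a full character sum modulo \<open>p\<close>, which vanishes unless \<open>p\<close> divides \<open>a r t\<close>.\<close>

lemma sum_ee_Mphase_shifts:
  fixes p :: nat and t :: int
  assumes pi_norm: "\<pi> * cnj \<pi> = of_nat p" and "prime p" and "c' \<noteq> 0" and "\<not> int p dvd a"
    and trace: "\<pi> + cnj \<pi> = of_int t" and "\<not> int p dvd t"
    and g_trace: "g + cnj g \<in> \<int>" and v_trace: "v + cnj v \<in> \<int>"
  shows "(\<Sum>r<p. \<Sum>s<p. ee (Mphase a d (int p * c') (\<pi> * v) (\<pi> * g + of_nat r + of_int c' * \<pi> * of_nat s)))
       = of_nat p * ee (Mphase a d (int p * c') (\<pi> * v) (\<pi> * g))"
proof -
  let ?Q = "Mphase a d (int p * c') (\<pi> * v)"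
  have p0: "p \<noteq> 0" using \<open>prime p\<close> by auto
  have shift: "ee (?Q (\<pi> * g + of_nat r + of_int c' * \<pi> * of_nat s))
      = ee (?Q (\<pi> * g + of_nat r)) * ee (of_int (a * int r * t) * of_nat s / of_nat p)" for r s
  proof -
    have "of_int a * of_nat s * (g + cnj g) + of_int a * of_int c' * of_nat s * of_nat s - of_nat s * (v + cnj v) \<in> \<int>"
      by (rule Ints_diff[OF Ints_add[OF Ints_mult[OF _ g_trace] Ints_mult] Ints_mult[OF _ v_trace]]) auto
    then show ?thesis
      unfolding Mphase_shift[OF pi_norm p0 \<open>c' \<noteq> 0\<close>] trace by (simp add: ee_add_Ints ee_add[symmetric])
  qed
  have dvd_iff: "int p dvd a * int r * t \<longleftrightarrow> r = 0" if "r < p" for r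
  proof
    assume "int p dvd a * int r * t"
    then have "p dvd r" using assms(2,4,6) by (simp add: prime_dvd_mult_iff)
    then show "r = 0" using that by (metis dvd_imp_le not_le neq0_conv)
  qed simp
  have "(\<Sum>r<p. \<Sum>s<p. ee (?Q (\<pi> * g + of_nat r + of_int c' * \<pi> * of_nat s)))
      = (\<Sum>r<p. ee (?Q (\<pi> * g + of_nat r)) * (\<Sum>s<p. ee (of_int (a * int r * t) * of_nat s / of_nat p)))"
    by (simp add: shift sum_distrib_left)
  also have "\<dots> = (\<Sum>r<p. if r = 0 then ee (?Q (\<pi> * g + of_nat r)) * of_nat p else 0)"
  proof (rule sum.cong[OF refl])
    fix r assume "r \<in> {..<p}"
    then show "ee (?Q (\<pi> * g + of_nat r)) * (\<Sum>s<p. ee (of_int (a * int r * t) * of_nat s / of_nat p))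
        = (if r = 0 then ee (?Q (\<pi> * g + of_nat r)) * of_nat p else 0)"
      using ee_geometric_sum[of p "a * int r * t"] p0 dvd_iff[of r] by simp
  qed
  also have "\<dots> = of_nat p * ee (?Q (\<pi> * g))" using p0 by (simp add: sum.delta)
  finally show ?thesis .
qed

lemma abs_mult_less_abs_imp_eq_0:
  fixes k n :: int
  assumes "\<bar>k * n\<bar> < \<bar>k\<bar>"
  shows "n = 0"
proof (rule ccontr)
  assume "n \<noteq> 0"
  then have "\<bar>k\<bar> * 1 \<le> \<bar>k\<bar> * \<bar>n\<bar>" by (intro mult_left_mono) simp_all
  then show False using assms by (simp add: abs_mult)
qed

text \<open>\<open>N\<^sup>2\<close> pairwise incongruent elements of \<open>O\<close> represent every class of \<open>O/NO\<close>, as the box does.\<close>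

lemma sum_box_eq_sum_residue_system:
  fixes q :: "complex \<Rightarrow> complex" and N :: int and \<phi> :: "'a \<Rightarrow> complex"
  assumes "N > 0" and "finite S" and card_S: "card S = nat N * nat N"
    and periodic: "\<And>z l. z \<in> OK D \<Longrightarrow> l \<in> OK D \<Longrightarrow> q (z + of_int N * l) = q z"
    and \<phi>_OK: "\<And>s. s \<in> S \<Longrightarrow> \<phi> s \<in> OK D"
    and incongruent: "\<And>s s' l. s \<in> S \<Longrightarrow> s' \<in> S \<Longrightarrow> l \<in> OK D \<Longrightarrow> \<phi> s - \<phi> s' = of_int N * l \<Longrightarrow> s = s'"
  shows "(\<Sum>(x,y)\<in>{0..<N} \<times> {0..<N}. q (of_int x + of_int y * omegaK D)) = (\<Sum>s\<in>S. q (\<phi> s))"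
proof -
  define coords where "coords z = (SOME xy. z = of_int (fst xy) + of_int (snd xy) * omegaK D)" for z
  have coords: "z = of_int (fst (coords z)) + of_int (snd (coords z)) * omegaK D" if "z \<in> OK D" for z
  proof -
    from that obtain x y where "z = of_int x + of_int y * omegaK D" unfolding OK_iff by blast
    then have "\<exists>xy. z = of_int (fst xy) + of_int (snd xy) * omegaK D" by (intro exI[of _ "(x,y)"]) simp
    then show ?thesis unfolding coords_def by (rule someI_ex)
  qed
  define g where "g s = (fst (coords (\<phi> s)) mod N, snd (coords (\<phi> s)) mod N)" for s
  define h where "h s = of_int (fst (coords (\<phi> s)) div N) + of_int (snd (coords (\<phi> s)) div N) * omegaK D" for s
  have h_OK: "h s \<in> OK D" for s unfolding h_def OK_iff by blast
  have \<phi>_decomp: "\<phi> s = (of_int (fst (g s)) + of_int (snd (g s)) * omegaK D) + of_int N * h s" if "s \<in> S" for s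
  proof -
    have div_mod: "(of_int x :: complex) = of_int (x mod N) + of_int N * of_int (x div N)" for x
      by (metis mod_mult_div_eq of_int_add of_int_mult)
    have "\<phi> s = of_int (fst (coords (\<phi> s))) + of_int (snd (coords (\<phi> s))) * omegaK D"
      using coords \<phi>_OK that by blast
    also have "\<dots> = (of_int (fst (g s)) + of_int (snd (g s)) * omegaK D) + of_int N * h s"
      unfolding g_def h_def fst_conv snd_conv
      by (subst (1 2) div_mod) (simp add: algebra_simps)
    finally show ?thesis .
  qed
  define R where "R = {0..<N} \<times> {0..<N}"
  have "inj_on g S"
  proof (rule inj_onI)
    fix s s' assume s: "s \<in> S" "s' \<in> S" "g s = g s'"
    have "\<phi> s - \<phi> s' = of_int N * (h s - h s')"
      using \<phi>_decomp[OF s(1)] \<phi>_decomp[OF s(2)] s(3) by (simp add: algebra_simps)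
    then show "s = s'" using incongruent[OF s(1,2) OK_diff[OF h_OK h_OK]] by blast
  qed
  moreover have "g ` S = R"
  proof (rule card_subset_eq)
    show "g ` S \<subseteq> R" unfolding R_def g_def using \<open>N > 0\<close> by auto
    show "card (g ` S) = card R"
      using card_S card_image[OF \<open>inj_on g S\<close>] unfolding R_def by (simp add: card_cartesian_product)
  qed (simp add: R_def)
  ultimately have "bij_betw g S R" unfolding bij_betw_def by blast
  then have "(\<Sum>(x,y)\<in>R. q (of_int x + of_int y * omegaK D)) = (\<Sum>s\<in>S. q (of_int (fst (g s)) + of_int (snd (g s)) * omegaK D))"
    by (subst sum.reindex_bij_betw[symmetric]) (simp_all add: case_prod_beta)
  also have "\<dots> = (\<Sum>s\<in>S. q (\<phi> s))"
  proof (rule sum.cong[OF refl])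
    fix s assume "s \<in> S"
    have "of_int (fst (g s)) + of_int (snd (g s)) * omegaK D \<in> OK D" unfolding OK_iff by blast
    then show "q (of_int (fst (g s)) + of_int (snd (g s)) * omegaK D) = q (\<phi> s)"
      using periodic[OF _ h_OK] \<phi>_decomp[OF \<open>s \<in> S\<close>] by simp
  qed
  finally show ?thesis unfolding R_def .
qed

lemma OK_coords_small_multiple_eq_0:
  assumes "D > 0" "\<bar>x\<bar> < \<bar>c\<bar>" "\<bar>y\<bar> < \<bar>c\<bar>" "m \<in> OK D"
    and "of_int x + of_int y * omegaK D = of_int c * m"
  shows "x = 0 \<and> y = 0"
proof -
  obtain m1 m2 where "m = of_int m1 + of_int m2 * omegaK D" using assms(4) unfolding OK_iff by blast
  then have "of_int x + of_int y * omegaK D = of_int (c * m1) + of_int (c * m2) * omegaK D"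
    using assms(5) by (simp add: algebra_simps)
  then have "x = c * m1" "y = c * m2" using OK_coords_unique[OF assms(1)] by blast+
  then show ?thesis using assms(2,3) abs_mult_less_abs_imp_eq_0[of c m1] abs_mult_less_abs_imp_eq_0[of c m2] by simp
qed

definition pi_residue :: "nat \<Rightarrow> complex \<Rightarrow> int \<Rightarrow> (int \<times> int) \<times> nat \<times> nat \<Rightarrow> complex" where
  "pi_residue D \<pi> c' = (\<lambda>((i,j),(r,s)). \<pi> * (of_int i + of_int j * omegaK D) + of_nat r + of_int c' * \<pi> * of_nat s)"

lemma pi_residue_OK: "D mod 4 = 3 \<Longrightarrow> \<pi> \<in> OK D \<Longrightarrow> pi_residue D \<pi> c' x \<in> OK D"
  unfolding pi_residue_def by (cases x) (auto intro!: OK_add OK_mult)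

text \<open>Reduce the congruence modulo \<open>\<pi>\<close>, then modulo \<open>c'\<close>, then modulo \<open>cnj \<pi>\<close>.\<close>

lemma pi_residue_incongruent:
  fixes p :: nat
  assumes "D mod 4 = 3" "D > 0" "prime p" "NK \<pi> = of_nat p" "\<pi> \<in> OK D" "c' \<noteq> 0"
    and "x \<in> ({0..<\<bar>c'\<bar>} \<times> {0..<\<bar>c'\<bar>}) \<times> ({0..<p} \<times> {0..<p})"
    and "x' \<in> ({0..<\<bar>c'\<bar>} \<times> {0..<\<bar>c'\<bar>}) \<times> ({0..<p} \<times> {0..<p})"
    and "l \<in> OK D" and cong: "pi_residue D \<pi> c' x - pi_residue D \<pi> c' x' = of_nat p * of_int c' * l"
  shows "x = x'"
proof -
  obtain i j r s i' j' r' s' where x: "x = ((i,j),(r,s))" and x': "x' = ((i',j'),(r',s'))"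
    by (cases x, cases x') auto
  define X where "X = of_int (i - i') + of_int (j - j') * omegaK D"
  define ds where "ds = int s - int s'"
  have pi_norm: "\<pi> * cnj \<pi> = of_nat p" using assms(4) unfolding NK_def .
  have "\<pi> \<noteq> 0" using pi_norm assms(3) by (auto simp: prime_gt_0_nat)
  have "\<pi> * X + of_int (int r - int r') + of_int c' * \<pi> * of_int ds = of_nat p * of_int c' * l"
    using cong unfolding x x' pi_residue_def X_def ds_def by (simp add: algebra_simps)
  then have r_eq: "of_int (int r - int r') = \<pi> * (cnj \<pi> * of_int c' * l - X - of_int c' * of_int ds)"
    and eq: "\<pi> * X + of_int (int r - int r') + of_int c' * \<pi> * of_int ds = \<pi> * (cnj \<pi> * of_int c' * l)"
    unfolding pi_norm[symmetric] by (simp_all add: algebra_simps)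
  have "X \<in> OK D" unfolding X_def OK_iff by blast
  then have "cnj \<pi> * of_int c' * l - X - of_int c' * of_int ds \<in> OK D"
    using assms(1,5,9) by (intro OK_diff OK_mult OK_cnj) auto
  then have "r = r'"
    using int_in_pi_OK_small_eq_0[OF assms(1,3,4) _ r_eq] assms(7,8) unfolding x x' by auto
  then have "\<pi> * (X + of_int c' * of_int ds) = \<pi> * (of_int c' * (cnj \<pi> * l))"
    using eq by (simp add: algebra_simps)
  then have "X + of_int c' * of_int ds = of_int c' * (cnj \<pi> * l)"
    using \<open>\<pi> \<noteq> 0\<close> mult_left_cancel by blast
  then have X_mult: "X = of_int c' * (cnj \<pi> * l - of_int ds)" by (simp add: algebra_simps)
  moreover have "cnj \<pi> * l - of_int ds \<in> OK D" using assms(1,5,9) by (intro OK_diff OK_mult OK_cnj) auto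
  ultimately have "i = i'" "j = j'"
    using OK_coords_small_multiple_eq_0[OF assms(2), of "i - i'" c' "j - j'"] assms(7,8)
    unfolding X_def x x' by auto
  then have "of_int ds = cnj \<pi> * l"
    using X_mult assms(6) unfolding X_def by simp
  then have "of_int ds = \<pi> * cnj l"
    by (metis complex_cnj_cnj complex_cnj_mult complex_cnj_of_int)
  moreover have "\<bar>ds\<bar> < int p" using assms(7,8) unfolding x x' ds_def by auto
  ultimately have "ds = 0" using int_in_pi_OK_small_eq_0[OF assms(1,3,4) OK_cnj[OF assms(9)]] by blast
  then have "s = s'" unfolding ds_def by simp
  then show ?thesis using \<open>i = i'\<close> \<open>j = j'\<close> \<open>r = r'\<close> unfolding x x' by simp
qed

lemma sum_box_eq_sum_pi_residues:
  fixes p :: nat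
  assumes D: "D mod 4 = 3" "D > 0" and "prime p" "NK \<pi> = of_nat p" "\<pi> \<in> OK D" "c' \<noteq> 0"
    and uv: "u \<in> Dinv D" "v \<in> Dinv D"
  shows "(\<Sum>(x,y)\<in>{0..<\<bar>int p * c'\<bar>} \<times> {0..<\<bar>int p * c'\<bar>}.
            ee (Mphase a d (int p * c') (\<pi> * v) (\<pi> * u + of_int x + of_int y * omegaK D)))
       = (\<Sum>(i,j)\<in>{0..<\<bar>c'\<bar>} \<times> {0..<\<bar>c'\<bar>}. \<Sum>r<p. \<Sum>s<p.
            ee (Mphase a d (int p * c') (\<pi> * v) (\<pi> * (u + of_int i + of_int j * omegaK D) + of_nat r + of_int c' * \<pi> * of_nat s)))"
proof -
  let ?c = "int p * c'"
  let ?q = "\<lambda>z. ee (Mphase a d ?c (\<pi> * v) (\<pi> * u + z))"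
  let ?S = "({0..<\<bar>c'\<bar>} \<times> {0..<\<bar>c'\<bar>}) \<times> ({0..<p} \<times> {0..<p})"
  have "?c \<noteq> 0" using assms(3,6) by (simp add: prime_gt_0_nat)
  have abs_c: "of_int \<bar>?c\<bar> * l = of_int ?c * (of_int (sgn ?c) * l)" for l :: complex
    unfolding abs_sgn[of ?c] by (simp add: ac_simps)
  have periodic: "?q (z + of_int \<bar>?c\<bar> * l) = ?q z" if "z \<in> OK D" "l \<in> OK D" for z l
  proof -
    have "\<pi> * u + z \<in> Dinv D"
      using Dinv_add[OF Dinv_mult[OF D(1) assms(5) uv(1)] OK_subset_Dinv[OF D that(1)]] .
    from ee_Mphase_periodic[OF D \<open>?c \<noteq> 0\<close> this Dinv_mult[OF D(1) assms(5) uv(2)]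
        OK_mult[OF D(1) OK_of_int[of "sgn ?c"] that(2)]]
    show ?thesis unfolding abs_c by (simp add: add.assoc)
  qed
  have card: "card ?S = nat \<bar>?c\<bar> * nat \<bar>?c\<bar>"
    by (simp add: card_cartesian_product abs_mult nat_mult_distrib)
  have incongruent: "x = x'" if "x \<in> ?S" "x' \<in> ?S" "l \<in> OK D"
    and "pi_residue D \<pi> c' x - pi_residue D \<pi> c' x' = of_int \<bar>?c\<bar> * l" for x x' l
  proof (rule pi_residue_incongruent[OF D assms(3-6) that(1,2)])
    show "of_int (sgn ?c) * l \<in> OK D" using OK_mult[OF D(1) OK_of_int that(3)] .
    show "pi_residue D \<pi> c' x - pi_residue D \<pi> c' x' = of_nat p * of_int c' * (of_int (sgn ?c) * l)"
      using that(4) unfolding abs_c by simp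
  qed
  have "(\<Sum>(x,y)\<in>{0..<\<bar>?c\<bar>} \<times> {0..<\<bar>?c\<bar>}. ?q (of_int x + of_int y * omegaK D)) = (\<Sum>x\<in>?S. ?q (pi_residue D \<pi> c' x))"
    using \<open>?c \<noteq> 0\<close> pi_residue_OK[OF D(1) assms(5)]
    by (intro sum_box_eq_sum_residue_system[OF _ _ card periodic _ incongruent]) auto
  also have "\<dots> = (\<Sum>ij\<in>{0..<\<bar>c'\<bar>} \<times> {0..<\<bar>c'\<bar>}. \<Sum>(r,s)\<in>{..<p} \<times> {..<p}. ?q (pi_residue D \<pi> c' (ij,(r,s))))"
    by (simp add: sum.cartesian_product atLeast0LessThan split_def)
  finally show ?thesis
    by (simp add: sum.cartesian_product pi_residue_def split_def algebra_simps)
qed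

lemma Mcoef_mult_prime_norm_lower_zero:
  fixes p :: nat
  assumes D: "D mod 4 = 3" "D > 0" and "prime p" "\<not> int p dvd int D" "\<pi> \<in> OK D" "NK \<pi> = of_nat p"
    and "u \<in> Dinv D" "v \<in> Dinv D"
  shows "Mcoef D (\<pi> * u) (\<pi> * v) (a, b, 0, d) = Mcoef D u v (a, int p * b, 0, d)"
proof -
  have "u - of_int a * v \<in> Dinv D" using Dinv_diff[OF assms(7) Dinv_mult[OF D(1) OK_of_int assms(8)]] .
  moreover have "\<pi> * u - of_int a * (\<pi> * v) = \<pi> * (u - of_int a * v)" by (simp add: algebra_simps)
  ultimately have "\<pi> * u - of_int a * (\<pi> * v) \<in> OK D \<longleftrightarrow> u - of_int a * v \<in> OK D"
    using Dinv_OK_if_pi_mult_OK[OF D assms(3-6)] OK_mult[OF D(1) assms(5)] by auto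
  moreover have "NK (\<pi> * u) = of_nat p * NK u" using NK_mult[of \<pi> u] assms(6) by simp
  ultimately show ?thesis by (simp add: Mcoef_def algebra_simps)
qed

lemma Mcoef_mult_prime_norm_lower_nonzero:
  fixes p :: nat
  assumes D: "D mod 4 = 3" "D > 0" and "prime p" "p > 2" "\<not> int p dvd int D" "\<pi> \<in> OK D" "NK \<pi> = of_nat p"
    and uv: "u \<in> Dinv D" "v \<in> Dinv D" and "c' \<noteq> 0" and det: "a * d - b * (int p * c') = 1"
  shows "Mcoef D (\<pi> * u) (\<pi> * v) (a, b, int p * c', d) = Mcoef D u v (a, int p * b, c', d)"
proof -
  have "p \<noteq> 0" and pi_norm: "\<pi> * cnj \<pi> = of_nat p" using assms(3,7) by (auto simp: NK_def)
  have "\<not> int p dvd a"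
  proof
    assume "int p dvd a"
    then have "int p dvd a * d - b * (int p * c')" by simp
    then show False using det assms(4) by simp
  qed
  obtain t where "\<pi> + cnj \<pi> = of_int t" "\<not> int p dvd t"
    using trace_prime_norm_not_dvd[OF D(1) assms(3-7)] .
  have inner: "(\<Sum>r<p. \<Sum>s<p. ee (Mphase a d (int p * c') (\<pi> * v) (\<pi> * g + of_nat r + of_int c' * \<pi> * of_nat s)))
      = of_nat p * ee (Mphase a d c' v g)" if "g \<in> Dinv D" for g
    using sum_ee_Mphase_shifts[OF pi_norm assms(3,10) \<open>\<not> int p dvd a\<close> \<open>\<pi> + cnj \<pi> = _\<close> \<open>\<not> int p dvd t\<close>
        Dinv_add_cnj_Ints[OF D that] Dinv_add_cnj_Ints[OF D uv(2)]]
    unfolding Mphase_mult_prime_norm[OF pi_norm \<open>p \<noteq> 0\<close>] .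
  have g_Dinv: "u + of_int i + of_int j * omegaK D \<in> Dinv D" for i j
    using Dinv_add[OF Dinv_add[OF uv(1) OK_subset_Dinv[OF D OK_of_int]] OK_subset_Dinv[OF D OK_mult[OF D(1) OK_of_int OK_omegaK]]] .
  have "int p * c' \<noteq> 0" using \<open>p \<noteq> 0\<close> assms(10) by simp
  have "Mcoef D (\<pi> * u) (\<pi> * v) (a, b, int p * c', d)
      = - \<i> / (of_int (int p * c') * complex_of_real (sqrt (real D))) *
        (\<Sum>(i,j)\<in>{0..<\<bar>c'\<bar>} \<times> {0..<\<bar>c'\<bar>}. of_nat p * ee (Mphase a d c' v (u + of_int i + of_int j * omegaK D)))"
    unfolding Mcoef_lower_nonzero[OF \<open>int p * c' \<noteq> 0\<close>] sum_box_eq_sum_pi_residues[OF D assms(3,7,6,10) uv]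
    by (simp only: inner g_Dinv)
  also have "\<dots> = Mcoef D u v (a, int p * b, c', d)"
    using \<open>p \<noteq> 0\<close> unfolding Mcoef_lower_nonzero[OF assms(10)] sum_distrib_left[symmetric] case_prod_beta
    by (simp add: field_simps)
  finally show ?thesis .
qed

theorem proposition3p6:
  fixes D p :: nat and \<pi> u v :: complex and \<sigma> :: "int \<times> int \<times> int \<times> int"
  assumes "prime D" and "D mod 4 = 3" and "class_number_one D"
    and "prime p" and "p > 2" and "chiK D p = 1"
    and "\<pi> \<in> OK D" and "NK \<pi> = of_nat p"
    and "u \<in> Dinv D" and "v \<in> Dinv D"
    and "\<sigma> \<in> Gamma0 p"
  shows "Mcoef D (\<pi> * u) (\<pi> * v) \<sigma> = Mcoef D u v (conj_p p \<sigma>)"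
proof -
  obtain a b c d where \<sigma>: "\<sigma> = (a, b, c, d)" by (cases \<sigma>) auto
  with assms(11) have det: "a * d - b * c = 1" and "int p dvd c" by (auto simp: Gamma0_def SL2Z_def)
  then obtain c' where c: "c = int p * c'" by blast
  have D: "D mod 4 = 3" "D > 0" using assms(1,2) by (auto simp: prime_gt_0_nat)
  have p_D: "\<not> int p dvd int D" using not_dvd_if_chiK_eq_1[OF assms(6)] .
  have conj: "conj_p p \<sigma> = (a, int p * b, c', d)" using assms(4) by (simp add: conj_p_def \<sigma> c)
  show ?thesis
  proof (cases "c' = 0")
    case True
    then show ?thesis
      unfolding conj using Mcoef_mult_prime_norm_lower_zero[OF D assms(4) p_D assms(7-10)] by (simp add: \<sigma> c)
  next
    case False
    then show ?thesis
      unfolding conj using Mcoef_mult_prime_norm_lower_nonzero[OF D assms(4,5) p_D assms(7-10) False det[unfolded c]]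
      by (simp add: \<sigma> c)
  qed
qed

end
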